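(* Let $n\ge2$, and let $m$ and $I$ be as follows: $n-1=\sum_{i=0}^m p_i2^i$ with $p_i\in\{0,1\}$, $p_m=1$, $I=\{i\mid p_i=1\}$. (1) The finite set of formulas $\{\,y_0\equiv\neg q_{1/n},\ \bigwedge_{i=1}^m (y_i\equiv y_{i-1}^2),\ q_{1/n}\equiv\prod_{i\in I}y_i\,\}$ implicitly defines $1/n$ in the variable $q_{1/n}$ in the standard MV-algebra $[0,1]_{\text{Ł}}$ (i.e. it is satisfiable there, and every valuation giving all its members value $1$ gives $q_{1/n}$ value $1/n$). (2) The size of this set of formulas is polynomial in the binary size of $n$ (i.e. in $\log n$).
   Context: Standard MV-algebra $[0,1]_{\text{Ł}}$: $x\cdot y=\max(0,x+y-1)$, $\neg x=1-x$, $x\land y=\min(x,y)$, $x\equiv y=1-|x-y|$. Powers and $\prod$ refer to $\cdot$. $q_{1/n},y_0,\dots,y_m$ are distinct propositional variables. *)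

theory Defs
  imports Complex_Main
begin

datatype fm =
    Var nat
  | Top              \<comment> \<open>constant 1 (only used as the empty conjunction/product)\<close>
  | Neg fm
  | Wedge fm fm
  | Times fm fm
  | Equiv fm fm

fun eval :: "(nat \<Rightarrow> real) \<Rightarrow> fm \<Rightarrow> real" where
  "eval v (Var i) = v i"
| "eval v Top = 1"
| "eval v (Neg a) = 1 - eval v a"
| "eval v (Wedge a b) = min (eval v a) (eval v b)"
| "eval v (Times a b) = max 0 (eval v a + eval v b - 1)"
| "eval v (Equiv a b) = 1 - \<bar>eval v a - eval v b\<bar>"

definition valuation :: "(nat \<Rightarrow> real) \<Rightarrow> bool" where
  "valuation v \<longleftrightarrow> (\<forall>i. 0 \<le> v i \<and> v i \<le> 1)"

fun fsize :: "fm \<Rightarrow> nat" where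
  "fsize (Var i) = 1"
| "fsize Top = 1"
| "fsize (Neg a) = 1 + fsize a"
| "fsize (Wedge a b) = 1 + fsize a + fsize b"
| "fsize (Times a b) = 1 + fsize a + fsize b"
| "fsize (Equiv a b) = 1 + fsize a + fsize b"

fun bigwedge :: "fm list \<Rightarrow> fm" where
  "bigwedge [] = Top"
| "bigwedge [a] = a"
| "bigwedge (a # as) = Wedge a (bigwedge as)"

fun bigtimes :: "fm list \<Rightarrow> fm" where
  "bigtimes [] = Top"
| "bigtimes [a] = a"
| "bigtimes (a # as) = Times a (bigtimes as)"

abbreviation q :: fm where "q \<equiv> Var 0"
abbreviation y :: "nat \<Rightarrow> fm" where "y i \<equiv> Var (Suc i)"

text \<open>The set of formulas of the lemma, for binary digits p_0..p_m (I = {i \<le> m. p i = 1}).\<close>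
definition Gamma :: "nat \<Rightarrow> (nat \<Rightarrow> nat) \<Rightarrow> fm list" where
  "Gamma m p =
     [ Equiv (y 0) (Neg q),
       bigwedge (map (\<lambda>i. Equiv (y i) (Times (y (i - 1)) (y (i - 1)))) [1..<Suc m]),
       Equiv q (bigtimes (map y (filter (\<lambda>i. p i = 1) [0..<Suc m]))) ]"

definition total_size :: "fm list \<Rightarrow> nat" where
  "total_size \<Gamma> = sum_list (map fsize \<Gamma>)"

definition implicitly_defines :: "fm list \<Rightarrow> nat \<Rightarrow> real \<Rightarrow> bool" where
  "implicitly_defines \<Gamma> x r \<longleftrightarrow>
     (\<exists>v. valuation v \<and> (\<forall>\<phi>\<in>set \<Gamma>. eval v \<phi> = 1)) \<and>
     (\<forall>v. valuation v \<and> (\<forall>\<phi>\<in>set \<Gamma>. eval v \<phi> = 1) \<longrightarrow> v x = r)"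

definition binary_digits :: "nat \<Rightarrow> nat \<Rightarrow> (nat \<Rightarrow> nat) \<Rightarrow> bool" where
  "binary_digits N m p \<longleftrightarrow>
     N = (\<Sum>i\<le>m. p i * 2 ^ i) \<and> (\<forall>i\<le>m. p i \<in> {0, 1}) \<and> p m = 1"

end

theory Submission
  imports Defs
begin

text \<open>Let \<open>t\<close> be the value of \<open>q\<^sub>1\<^sub>/\<^sub>n\<close>. The first two formulas force
  \<open>y\<^sub>i = max 0 (1 - 2\<^sup>i t)\<close>, since Lukasiewicz squaring doubles the deficit \<open>1 - y\<close>.
  A Lukasiewicz product is one minus the truncated sum of the deficits of its factors, so
  the third formula says \<open>t = max 0 (1 - (n - 1) t)\<close>, whose only solution in \<open>[0,1]\<close> is
  \<open>t = 1/n\<close>. The set consists of \<open>O(m)\<close> symbols, and \<open>2\<^sup>m \<le> n - 1\<close>.\<close>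

definition digit_positions :: "nat \<Rightarrow> (nat \<Rightarrow> nat) \<Rightarrow> nat list" where
  "digit_positions m p = filter (\<lambda>i. p i = 1) [0..<Suc m]"

lemma eval_Equiv_eq_1: "eval v (Equiv a b) = 1 \<longleftrightarrow> eval v a = eval v b"
  by auto

lemma eval_Equiv_le_1: "eval v (Equiv a b) \<le> 1"
  by simp

lemma eval_bigwedge_eq_1:
  assumes "\<forall>a\<in>set as. eval v a \<le> 1"
  shows "eval v (bigwedge as) = 1 \<longleftrightarrow> (\<forall>a\<in>set as. eval v a = 1)"
proof -
  have "eval v (bigwedge as) \<le> 1 \<and> (eval v (bigwedge as) = 1 \<longleftrightarrow> (\<forall>a\<in>set as. eval v a = 1))"
    using assms by (induction as rule: bigwedge.induct) (auto simp: min_def)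
  then show ?thesis ..
qed

lemma eval_bigtimes:
  assumes "\<forall>a\<in>set as. 0 \<le> eval v a \<and> eval v a \<le> 1"
  shows "eval v (bigtimes as) = max 0 (1 - (\<Sum>a\<leftarrow>as. 1 - eval v a))"
  using assms
proof (induction as rule: bigtimes.induct)
  case (3 a b as)
  have "0 \<le> (\<Sum>c\<leftarrow>as. 1 - eval v c)"
    using "3.prems" by (intro sum_list_nonneg) auto
  then show ?case using "3" by auto
qed auto

lemma max_0_one_minus_sum_list_min_1:
  fixes c :: "'a \<Rightarrow> real"
  assumes "\<forall>x\<in>set xs. 0 \<le> c x"
  shows "max 0 (1 - (\<Sum>x\<leftarrow>xs. min 1 (c x))) = max 0 (1 - (\<Sum>x\<leftarrow>xs. c x))"
  using assms
proof (induction xs)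
  case (Cons x xs)
  have "0 \<le> (\<Sum>x\<leftarrow>xs. min 1 (c x))" "0 \<le> (\<Sum>x\<leftarrow>xs. c x)"
    using Cons.prems by (auto intro!: sum_list_nonneg)
  then show ?case using Cons by (auto simp: max_def min_def split: if_splits)
qed simp

lemma luk_square_max_one_minus:
  fixes a :: real
  assumes "0 \<le> a"
  shows "max 0 (2 * max 0 (1 - a) - 1) = max 0 (1 - 2 * a)"
  using assms by (simp add: max_def)

lemma fixed_point_one_minus_mult:
  fixes t N :: real
  assumes "0 \<le> t" "0 \<le> N"
  shows "t = max 0 (1 - t * N) \<longleftrightarrow> t = 1 / (N + 1)"
proof
  assume t: "t = max 0 (1 - t * N)"
  then have "t \<noteq> 0" by auto
  with t have "t * (N + 1) = 1" by (auto simp: max_def algebra_simps split: if_splits)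
  then show "t = 1 / (N + 1)" using assms by (simp add: field_simps)
next
  assume "t = 1 / (N + 1)"
  then show "t = max 0 (1 - t * N)" using assms by (simp add: field_simps)
qed

lemma sum_digit_positions:
  assumes "\<forall>i\<le>m. p i \<in> {0, 1::nat}"
  shows "(\<Sum>i\<leftarrow>digit_positions m p. 2 ^ i) = (\<Sum>i\<le>m. p i * 2 ^ i)"
  using assms
proof (induction m)
  case (Suc m)
  have "p (Suc m) = 0 \<or> p (Suc m) = 1" using Suc.prems by auto
  then show ?case using Suc by (auto simp: digit_positions_def)
qed (auto simp: digit_positions_def)

lemma binary_digits_pow_le:
  assumes "binary_digits N m p"
  shows "2 ^ m \<le> N"
proof -
  have "p m * 2 ^ m \<le> (\<Sum>i\<le>m. p i * 2 ^ i)"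
    by (rule member_le_sum) auto
  then show ?thesis using assms by (simp add: binary_digits_def)
qed

lemma Gamma_eq_1_iff:
  assumes "valuation v"
  shows "(\<forall>\<phi>\<in>set (Gamma m p). eval v \<phi> = 1) \<longleftrightarrow>
           (\<forall>i\<le>m. v (Suc i) = max 0 (1 - 2 ^ i * v 0)) \<and>
           v 0 = max 0 (1 - v 0 * (\<Sum>i\<leftarrow>digit_positions m p. 2 ^ i))"
    (is "?sat \<longleftrightarrow> ?ys \<and> _")
proof -
  have t: "0 \<le> v 0" and v01: "\<And>i. 0 \<le> v i \<and> v i \<le> 1"
    using assms by (auto simp: valuation_def)
  let ?rec = "v 1 = 1 - v 0 \<and> (\<forall>i\<in>{1..m}. v (Suc i) = max 0 (2 * v i - 1))"
  have sat_iff: "?sat \<longleftrightarrow> ?rec \<and> v 0 = eval v (bigtimes (map y (digit_positions m p)))"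
    unfolding Gamma_def digit_positions_def[symmetric]
    by (auto simp: eval_Equiv_eq_1 eval_Equiv_le_1 eval_bigwedge_eq_1 simp del: eval.simps(6) upt_Suc)
  have rec_iff: "?rec \<longleftrightarrow> ?ys"
  proof
    assume rec: ?rec
    show ?ys
    proof (intro allI impI)
      fix i assume "i \<le> m"
      then show "v (Suc i) = max 0 (1 - 2 ^ i * v 0)"
      proof (induction i)
        case (Suc i)
        then have "v (Suc (Suc i)) = max 0 (2 * max 0 (1 - 2 ^ i * v 0) - 1)"
          using rec by simp
        then show ?case using luk_square_max_one_minus[of "2 ^ i * v 0"] t by simp
      qed (use rec v01[of 0] in simp)
    qed
  next
    assume ys: ?ys
    have "v (Suc i) = max 0 (2 * v i - 1)" if i: "i \<in> {1..m}" for i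
    proof -
      obtain j where j: "i = Suc j" using i by (cases i) auto
      have "v (Suc i) = max 0 (1 - 2 * (2 ^ j * v 0))" using ys i j by simp
      also have "\<dots> = max 0 (2 * v i - 1)"
        using ys i j luk_square_max_one_minus[of "2 ^ j * v 0"] t by simp
      finally show ?thesis .
    qed
    then show ?rec using ys v01[of 0] by simp
  qed
  have prod: "eval v (bigtimes (map y (digit_positions m p)))
                = max 0 (1 - v 0 * (\<Sum>i\<leftarrow>digit_positions m p. 2 ^ i))" if ?ys
  proof -
    have "\<forall>i\<in>set (digit_positions m p). 1 - v (Suc i) = min 1 (2 ^ i * v 0)"
      using that by (auto simp: digit_positions_def max_def min_def)
    then have "eval v (bigtimes (map y (digit_positions m p)))
                 = max 0 (1 - (\<Sum>i\<leftarrow>digit_positions m p. min 1 (2 ^ i * v 0)))"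
      using v01 by (simp add: eval_bigtimes o_def cong: map_cong)
    also have "\<dots> = max 0 (1 - (\<Sum>i\<leftarrow>digit_positions m p. 2 ^ i * v 0))"
      using t by (intro max_0_one_minus_sum_list_min_1) auto
    finally show ?thesis by (simp add: mult.commute sum_list_const_mult)
  qed
  show ?thesis unfolding sat_iff rec_iff using prod by auto
qed

lemma Gamma_implicitly_defines:
  assumes "n \<ge> 2" "binary_digits (n - 1) m p"
  shows "implicitly_defines (Gamma m p) 0 (1 / real n)"
proof -
  define N :: real where "N = (\<Sum>i\<leftarrow>digit_positions m p. 2 ^ i)"
  have N: "N = real n - 1"
  proof -
    have "N = real (\<Sum>i\<leftarrow>digit_positions m p. 2 ^ i)"
      by (simp add: N_def o_def flip: sum_list_of_nat)
    also have "\<dots> = real (n - 1)"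
      using assms(2) by (simp add: binary_digits_def sum_digit_positions)
    finally show ?thesis using assms(1) by simp
  qed
  have sat_iff: "(\<forall>\<phi>\<in>set (Gamma m p). eval v \<phi> = 1) \<longleftrightarrow>
                   (\<forall>i\<le>m. v (Suc i) = max 0 (1 - 2 ^ i * v 0)) \<and> v 0 = 1 / real n"
    if "valuation v" for v
    using Gamma_eq_1_iff[OF that] fixed_point_one_minus_mult[of "v 0" N] that N assms(1)
    by (auto simp: valuation_def N_def)
  define w where "w i = (if i = 0 then 1 / real n else max 0 (1 - 2 ^ (i - 1) / real n))" for i
  have "valuation w"
    using assms(1) by (auto simp: valuation_def w_def)
  moreover have "\<forall>\<phi>\<in>set (Gamma m p). eval w \<phi> = 1"
    using sat_iff[OF \<open>valuation w\<close>] by (simp add: w_def)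
  ultimately show ?thesis
    using sat_iff by (auto simp: implicitly_defines_def)
qed

lemma fsize_bigwedge:
  "\<forall>a\<in>set as. fsize a \<le> K \<Longrightarrow> fsize (bigwedge as) \<le> (K + 1) * length as + 1"
  by (induction as rule: bigwedge.induct) auto

lemma fsize_bigtimes:
  "\<forall>a\<in>set as. fsize a \<le> K \<Longrightarrow> fsize (bigtimes as) \<le> (K + 1) * length as + 1"
  by (induction as rule: bigtimes.induct) auto

lemma total_size_Gamma: "total_size (Gamma m p) \<le> 8 * m + 10"
proof -
  have "fsize (bigwedge (map (\<lambda>i. Equiv (y i) (Times (y (i - 1)) (y (i - 1)))) [1..<Suc m]))
          \<le> 6 * m + 1"
    using fsize_bigwedge[of "map (\<lambda>i. Equiv (y i) (Times (y (i - 1)) (y (i - 1)))) [1..<Suc m]" 5]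
    by (simp del: upt_Suc)
  moreover have "fsize (bigtimes (map y (digit_positions m p))) \<le> 2 * Suc m + 1"
  proof -
    have "length (digit_positions m p) \<le> Suc m"
      using length_filter_le[of "\<lambda>i. p i = 1" "[0..<Suc m]"] by (simp add: digit_positions_def)
    then show ?thesis using fsize_bigtimes[of "map y (digit_positions m p)" 1] by auto
  qed
  ultimately show ?thesis
    unfolding total_size_def Gamma_def digit_positions_def[symmetric] by (simp del: upt_Suc)
qed

lemma total_size_Gamma_le_log:
  assumes "n \<ge> 2" "binary_digits (n - 1) m p"
  shows "real (total_size (Gamma m p)) \<le> 18 * log 2 (real n)"
proof -
  have "2 ^ m \<le> n"
    using binary_digits_pow_le[OF assms(2)] by linarith
  then have "real (2 ^ m) \<le> real n"
    by (simp only: of_nat_le_iff)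
  then have "(2::real) ^ m \<le> real n"
    by simp
  then have "real m \<le> log 2 (real n)"
    by (simp add: le_log_of_power)
  moreover have "1 \<le> log 2 (real n)" using assms(1) by simp
  moreover have "real (total_size (Gamma m p)) \<le> 8 * real m + 10"
    using total_size_Gamma[of m p] by linarith
  ultimately show ?thesis by simp
qed

theorem lemma4p2:
  shows "(\<forall>(n::nat) m p. n \<ge> 2 \<longrightarrow> binary_digits (n - 1) m p \<longrightarrow>
            implicitly_defines (Gamma m p) 0 (1 / real n))
       \<and> (\<exists>(c::real) (k::nat). \<forall>(n::nat) m p. n \<ge> 2 \<longrightarrow> binary_digits (n - 1) m p \<longrightarrow>
            real (total_size (Gamma m p)) \<le> c * (log 2 (real n)) ^ k)"
proof -
  have "real (total_size (Gamma m p)) \<le> 18 * log 2 (real n) ^ 1"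
    if "n \<ge> 2" "binary_digits (n - 1) m p" for n m p
    using total_size_Gamma_le_log[OF that] by simp
  then show ?thesis using Gamma_implicitly_defines by blast
qed

end
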